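(* Let $c>0$, $\alpha>0$, $\lambda>1$, $\varepsilon=\lambda-1$, and let $r\le1$ be a $\lambda$-radius function which is $(c,\alpha)$-Diophantine; put $r'=\lambda r$. Let $V'\subset V\subset\mathbb C$ be open with $\delta(V',V)\ge\varepsilon$, and let $f=(f_n)$ be holomorphic sequences on $V(r)$ with $\sup_{V(r)_n}|f_n|\le A\rho^n$ for all $n$, where $A>0$ and $0<\rho<1$. Then $S(f)$ is Whitney $C^\infty$ on $\mathcal R(V'(r'))$, in the sense that for every $m\ge1$ there is $K_m$ with $|S(f)(z)-\sum_{k<m}\frac{1}{k!}S(f^{(k)})(z_0)(z-z_0)^k|\le K_m|z-z_0|^m$ for all $z,z_0\in\mathcal R(V'(r'))$, and for every $z_0\in\mathcal R(V'(r'))$ and every $m\ge0$, $$|S(f^{(m)})(z_0)|\le \frac{A\,m!}{c^m\varepsilon^m}\sum_{n\ge1}n^{\alpha m}\rho^n .$$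
   Context: Stacked space $\mathbb X=\mathbb N\times\mathbb P$ ($\mathbb N=\{1,2,\dots\}$), discrete pole set $\mathcal P\subset\mathbb X$, $P_n$ the poles on sheet $n$. Radius function $r:\mathcal P\to\mathbb R_{>0}$: constant on each sheet (value $r_n$), closed discs of radius $r$ around distinct poles of a sheet disjoint; $\lambda$-radius function: $\lambda r$ is a radius function. $r$ is $(c,\alpha)$-Diophantine if $r_n\ge c/n^\alpha$ for all $n$. $W(\rho)_n=\{z\in W:|z-a|\ge\rho_n\ \forall a\in P_n\}$, residual set $\mathcal R(W(\rho))=\bigcap_nW(\rho)_n$; $f_n$ holomorphic on a neighbourhood of $V(r)_n$; $S(g)(z)=\sum_ng_n(z)$. Huygens distance $\delta(U,V)=\sup\{\rho:\ D(z,\rho)\subset V\ \forall z\in U\}$. *)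

theory Defs
  imports "HOL-Analysis.Analysis"
begin

text \<open>Stacked space: sheets indexed by n \<ge> 1; the poles on sheet n are P n.
  A (sheetwise constant) radius function is given by its sheet values r n.\<close>

definition is_radius_function :: "(nat \<Rightarrow> complex set) \<Rightarrow> (nat \<Rightarrow> real) \<Rightarrow> bool" where
  "is_radius_function P r \<longleftrightarrow>
     (\<forall>n\<ge>1. r n > 0) \<and>
     (\<forall>n\<ge>1. \<forall>a\<in>P n. \<forall>b\<in>P n. a \<noteq> b \<longrightarrow> cball a (r n) \<inter> cball b (r n) = {})"

definition is_lambda_radius_function ::
  "real \<Rightarrow> (nat \<Rightarrow> complex set) \<Rightarrow> (nat \<Rightarrow> real) \<Rightarrow> bool" where
  "is_lambda_radius_function l P r \<longleftrightarrow> is_radius_function P (\<lambda>n. l * r n)"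

definition diophantine :: "real \<Rightarrow> real \<Rightarrow> (nat \<Rightarrow> real) \<Rightarrow> bool" where
  "diophantine c \<alpha> r \<longleftrightarrow> (\<forall>n\<ge>1. r n \<ge> c / real n powr \<alpha>)"

definition sheet_set :: "(nat \<Rightarrow> complex set) \<Rightarrow> complex set \<Rightarrow> (nat \<Rightarrow> real) \<Rightarrow> nat \<Rightarrow> complex set" where
  "sheet_set P W \<rho> n = {z \<in> W. \<forall>a\<in>P n. dist z a \<ge> \<rho> n}"

definition residual_set :: "(nat \<Rightarrow> complex set) \<Rightarrow> complex set \<Rightarrow> (nat \<Rightarrow> real) \<Rightarrow> complex set" where
  "residual_set P W \<rho> = (\<Inter>n\<in>{1..}. sheet_set P W \<rho> n)"

definition S :: "(nat \<Rightarrow> complex \<Rightarrow> complex) \<Rightarrow> complex \<Rightarrow> complex" where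
  "S g z = (\<Sum>n. g (Suc n) z)"

definition dseq :: "nat \<Rightarrow> (nat \<Rightarrow> complex \<Rightarrow> complex) \<Rightarrow> nat \<Rightarrow> complex \<Rightarrow> complex" where
  "dseq k g n = (deriv ^^ k) (g n)"

text \<open>Huygens distance (valued in extended reals so that it is well defined
  also when the defining set is unbounded); D(z,rho) is the open disc.\<close>
definition huygens_dist :: "complex set \<Rightarrow> complex set \<Rightarrow> ereal" where
  "huygens_dist U V = Sup {ereal \<rho> | \<rho>. \<forall>z\<in>U. ball z \<rho> \<subseteq> V}"

end

theory Submission
  imports Defs "HOL-Real_Asymp.Real_Asymp" "HOL-Complex_Analysis.Complex_Analysis"
begin

text \<open>A point \<open>z\<^sub>0\<close> of \<open>\<R>(V'(\<lambda>r))\<close> lies at distance \<open>\<ge> \<lambda> r\<^sub>n\<close> from the poles of sheet \<open>n\<close>,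
  so the disc of radius \<open>\<epsilon> r\<^sub>n\<close> around it stays at distance \<open>\<ge> r\<^sub>n\<close> from them, and it lies in
  \<open>V\<close> because \<open>\<epsilon> r\<^sub>n \<le> \<epsilon> \<le> \<delta>(V',V)\<close>. On that disc \<open>|f\<^sub>n| \<le> A \<rho>\<^sup>n\<close>, so the Cauchy inequalities
  give \<open>|f\<^sub>n\<^sup>(\<^sup>k\<^sup>)(z\<^sub>0)| \<le> A k! \<rho>\<^sup>n / (\<epsilon> r\<^sub>n)\<^sup>k \<le> A k! n\<^sup>\<alpha>\<^sup>k \<rho>\<^sup>n / (c\<^sup>k \<epsilon>\<^sup>k)\<close>, which is summable
  in \<open>n\<close>; the same discs give a Taylor remainder bound of order \<open>|z - z\<^sub>0|\<^sup>m / (\<epsilon> r\<^sub>n)\<^sup>m\<close> for each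
  \<open>f\<^sub>n\<close>, and these sum to the Whitney estimate.\<close>

lemma summable_powr_mult_geometric:
  fixes a \<rho> :: real
  assumes "0 < \<rho>" "\<rho> < 1"
  shows "summable (\<lambda>n. real (Suc n) powr a * \<rho> ^ Suc n)"
proof (rule summable_comparison_test_bigo)
  show "summable (\<lambda>n. norm (((1 + \<rho>) / 2) ^ n))"
    using assms by (simp add: norm_power)
  show "(\<lambda>n. real (Suc n) powr a * \<rho> ^ Suc n) \<in> O(\<lambda>n. ((1 + \<rho>) / 2) ^ n)"
    using assms by real_asymp
qed

lemma Cauchy_inequality_ball:
  fixes f :: "complex \<Rightarrow> complex"
  assumes holf: "f holomorphic_on ball z R" and "0 < R"
    and bound: "\<And>w. w \<in> ball z R \<Longrightarrow> norm (f w) \<le> M"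
  shows "norm ((deriv ^^ k) f z) \<le> fact k * M / R ^ k"
proof -
  text \<open>The library inequality needs continuity on the closed disc, so apply it on radii
    \<open>s < R\<close> and let \<open>s \<rightarrow> R\<close>.\<close>
  have smaller: "norm ((deriv ^^ k) f z) * s ^ k \<le> fact k * M" if s: "0 < s" "s < R" for s
  proof -
    have "norm ((deriv ^^ k) f z) \<le> fact k * M / s ^ k"
    proof (rule Cauchy_inequality)
      show "f holomorphic_on ball z s"
        using holf s by (auto intro: holomorphic_on_subset)
      show "continuous_on (cball z s) f"
        using holomorphic_on_imp_continuous_on[OF holf] s by (auto intro: continuous_on_subset)
      show "norm (f x) \<le> M" if "norm (z - x) = s" for x
        using bound[of x] that s by (simp add: dist_norm)
    qed fact
    then show ?thesis
      using s by (simp add: divide_simps)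
  qed
  have "norm ((deriv ^^ k) f z) * R ^ k \<le> fact k * M"
  proof (rule tendsto_le[OF trivial_limit_at_left_real])
    show "((\<lambda>s. norm ((deriv ^^ k) f z) * s ^ k) \<longlongrightarrow> norm ((deriv ^^ k) f z) * R ^ k) (at_left R)"
      by (intro tendsto_intros)
    show "eventually (\<lambda>s. norm ((deriv ^^ k) f z) * s ^ k \<le> fact k * M) (at_left R)"
      using eventually_at_left_real[OF \<open>0 < R\<close>] by eventually_elim (use smaller in auto)
  qed simp
  then show ?thesis
    using \<open>0 < R\<close> by (simp add: divide_simps)
qed

lemma norm_sums_remainder_le:
  fixes a :: "nat \<Rightarrow> 'a::banach"
  assumes "a sums s" and norm_a: "\<And>k. norm (a k) \<le> M * t ^ k" and "0 \<le> t" "t < 1"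
  shows "norm (s - (\<Sum>k<m. a k)) \<le> M * t ^ m / (1 - t)"
proof -
  have "s - (\<Sum>k<m. a k) = (\<Sum>j. a (j + m))"
    using assms(1) suminf_split_initial_segment[of a m] by (simp add: sums_iff)
  also have "norm \<dots> \<le> (\<Sum>j. M * t ^ m * t ^ j)"
  proof (rule norm_suminf_le)
    show "norm (a (j + m)) \<le> M * t ^ m * t ^ j" for j
      using norm_a[of "j + m"] by (simp add: power_add algebra_simps)
    show "summable (\<lambda>j. M * t ^ m * t ^ j)"
      using assms(3,4) by (intro summable_mult summable_geometric) simp
  qed
  also have "\<dots> = M * t ^ m / (1 - t)"
    using assms(3,4) by (subst suminf_mult) (auto simp: suminf_geometric)
  finally show ?thesis .
qed

lemma norm_diff_sum_le_of_half_le: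
  fixes a :: "nat \<Rightarrow> 'a::real_normed_vector"
  assumes "norm s \<le> M" and norm_a: "\<And>k. norm (a k) \<le> M * t ^ k" and "1/2 \<le> t"
  shows "norm (s - (\<Sum>k<m. a k)) \<le> (real m + 1) * 2 ^ m * M * t ^ m"
proof -
  have "M \<ge> 0"
    using assms(1) norm_ge_zero order_trans by blast
  have power_le: "t ^ k \<le> 2 ^ m * t ^ m" if "k \<le> m" for k
  proof -
    have "t ^ k \<le> (2 * t) ^ k"
      using assms(3) by (intro power_mono) auto
    also have "\<dots> \<le> (2 * t) ^ m"
      using assms(3) that by (intro power_increasing) auto
    finally show ?thesis
      by (simp add: power_mult_distrib)
  qed
  have "norm (s - (\<Sum>k<m. a k)) \<le> norm s + norm (\<Sum>k<m. a k)"
    by (rule norm_triangle_ineq4)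
  also have "\<dots> \<le> M + (\<Sum>k<m. M * t ^ k)"
    by (intro add_mono assms(1) order_trans[OF norm_sum] sum_mono norm_a)
  also have "\<dots> \<le> M * (2 ^ m * t ^ m) + (\<Sum>k<m. M * (2 ^ m * t ^ m))"
  proof (intro add_mono sum_mono)
    show "M \<le> M * (2 ^ m * t ^ m)"
      using mult_left_mono[OF power_le[of 0] \<open>M \<ge> 0\<close>] by simp
    show "M * t ^ k \<le> M * (2 ^ m * t ^ m)" if "k \<in> {..<m}" for k
      using that power_le[of k] \<open>M \<ge> 0\<close> by (intro mult_left_mono) auto
  qed
  also have "\<dots> = (real m + 1) * 2 ^ m * M * t ^ m"
    by (simp add: algebra_simps)
  finally show ?thesis .
qed

lemma holomorphic_taylor_remainder_bound:
  fixes g :: "complex \<Rightarrow> complex"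
  assumes holg: "g holomorphic_on ball z0 R" and "0 < R"
    and bound: "\<And>w. w \<in> ball z0 R \<Longrightarrow> norm (g w) \<le> M"
    and bound_z: "norm (g z) \<le> M"
  shows "norm (g z - (\<Sum>k<m. (deriv ^^ k) g z0 / fact k * (z - z0) ^ k))
           \<le> (real m + 2) * 2 ^ m * M * (norm (z - z0) / R) ^ m"
proof -
  define t where "t = norm (z - z0) / R"
  define a where "a k = (deriv ^^ k) g z0 / fact k * (z - z0) ^ k" for k
  have "t \<ge> 0"
    using \<open>0 < R\<close> by (simp add: t_def)
  have "M \<ge> 0"
    using bound_z norm_ge_zero order_trans by blast
  have norm_a: "norm (a k) \<le> M * t ^ k" for k
  proof -
    have "norm (a k) = norm ((deriv ^^ k) g z0) / fact k * norm (z - z0) ^ k"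
      by (simp add: a_def norm_mult norm_divide norm_power)
    also have "\<dots> \<le> (fact k * M / R ^ k) / fact k * norm (z - z0) ^ k"
      by (intro mult_right_mono divide_right_mono Cauchy_inequality_ball[OF holg \<open>0 < R\<close> bound]) auto
    also have "\<dots> = M * t ^ k"
      by (simp add: t_def power_divide)
    finally show ?thesis .
  qed
  text \<open>Near \<open>z0\<close> the remainder is the tail of the Taylor series; far from \<open>z0\<close> the crude
    bound \<open>|g z| + \<Sum>|a k|\<close> already suffices.\<close>
  have "norm (g z - (\<Sum>k<m. a k)) \<le> (real m + 2) * 2 ^ m * M * t ^ m"
  proof (cases "t < 1/2")
    case True
    then have "z \<in> ball z0 R"
      using \<open>0 < R\<close> by (simp add: t_def dist_norm norm_minus_commute divide_less_eq)
    then have "a sums g z"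
      unfolding a_def using holomorphic_power_series[OF holg] by simp
    then have "norm (g z - (\<Sum>k<m. a k)) \<le> M * t ^ m / (1 - t)"
      using True \<open>t \<ge> 0\<close> norm_a by (intro norm_sums_remainder_le) auto
    also have "\<dots> \<le> M * t ^ m * (2 * 1)"
    proof -
      have "1 / (1 - t) \<le> 2"
        using True by (simp add: field_simps)
      then show ?thesis
        using mult_left_mono[of "1 / (1 - t)" 2 "M * t ^ m"] \<open>t \<ge> 0\<close> \<open>M \<ge> 0\<close> by simp
    qed
    also have "\<dots> \<le> M * t ^ m * ((real m + 2) * 2 ^ m)"
      using \<open>t \<ge> 0\<close> \<open>M \<ge> 0\<close> by (intro mult_left_mono mult_mono) auto
    finally show ?thesis
      by (simp add: ac_simps)
  next
    case False
    then have "norm (g z - (\<Sum>k<m. a k)) \<le> (real m + 1) * 2 ^ m * M * t ^ m"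
      using bound_z norm_a by (intro norm_diff_sum_le_of_half_le) auto
    also have "\<dots> \<le> (real m + 2) * 2 ^ m * M * t ^ m"
      using \<open>t \<ge> 0\<close> \<open>M \<ge> 0\<close> by (intro mult_right_mono) auto
    finally show ?thesis .
  qed
  then show ?thesis
    by (simp add: a_def t_def)
qed

lemma ball_subset_of_huygens_dist:
  assumes "ereal \<delta> \<le> huygens_dist U V" "z \<in> U"
  shows "ball z \<delta> \<subseteq> V"
proof
  fix w assume "w \<in> ball z \<delta>"
  then have "ereal (dist z w) < ereal \<delta>"
    by simp
  then have "ereal (dist z w) < huygens_dist U V"
    using assms(1) by (rule order_less_le_trans)
  then obtain \<delta>' where "\<forall>u\<in>U. ball u \<delta>' \<subseteq> V" "dist z w < \<delta>'"
    unfolding huygens_dist_def less_Sup_iff by auto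
  then show "w \<in> V"
    using assms(2) by (meson mem_ball subsetD)
qed

lemma residual_set_subset_sheet_set:
  "n \<ge> 1 \<Longrightarrow> residual_set P W \<rho> \<subseteq> sheet_set P W \<rho> n"
  by (auto simp: residual_set_def)

lemma ball_subset_sheet_set:
  assumes "\<And>z. z \<in> W' \<Longrightarrow> ball z \<delta> \<subseteq> W" and "z0 \<in> sheet_set P W' \<rho>' n"
    and "s \<le> \<delta>" "s + \<rho> n \<le> \<rho>' n"
  shows "ball z0 s \<subseteq> sheet_set P W \<rho> n"
proof
  fix w assume w: "w \<in> ball z0 s"
  have "w \<in> W"
    using assms(1)[of z0] assms(2,3) w by (auto simp: sheet_set_def)
  moreover have "\<rho> n \<le> dist w a" if "a \<in> P n" for a
  proof -
    have "\<rho>' n \<le> dist z0 a"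
      using assms(2) that by (simp add: sheet_set_def)
    also have "\<dots> \<le> dist z0 w + dist w a"
      by (rule dist_triangle)
    finally show ?thesis
      using w assms(4) by simp
  qed
  ultimately show "w \<in> sheet_set P W \<rho> n"
    by (simp add: sheet_set_def)
qed

lemma diophantine_weight_le:
  assumes "diophantine c \<alpha> r" "0 < c" "0 < \<epsilon>" "0 \<le> A" "0 \<le> \<rho>" "n \<ge> 1"
  shows "A * \<rho> ^ n / (\<epsilon> * r n) ^ k \<le> A / (c ^ k * \<epsilon> ^ k) * (real n powr (\<alpha> * real k) * \<rho> ^ n)"
proof -
  have "0 < real n powr \<alpha>"
    using assms(6) by simp
  have "0 < c / real n powr \<alpha>"
    using assms(2) \<open>0 < real n powr \<alpha>\<close> by simp
  moreover have "c / real n powr \<alpha> \<le> r n"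
    using assms(1,6) by (simp add: diophantine_def)
  ultimately have "1 / (\<epsilon> * r n) ^ k \<le> 1 / (\<epsilon> * (c / real n powr \<alpha>)) ^ k"
    using assms(3) by (intro divide_left_mono power_mono mult_left_mono mult_pos_pos zero_less_power)
      (auto simp del: times_divide_eq_right)
  also have "\<dots> = real n powr (\<alpha> * real k) / (c ^ k * \<epsilon> ^ k)"
    using \<open>0 < real n powr \<alpha>\<close>
    by (simp add: power_divide power_mult_distrib powr_powr[symmetric] powr_realpow field_simps)
  finally have "A * \<rho> ^ n * (1 / (\<epsilon> * r n) ^ k)
      \<le> A * \<rho> ^ n * (real n powr (\<alpha> * real k) / (c ^ k * \<epsilon> ^ k))"
    using assms(4,5) by (intro mult_left_mono) auto
  then show ?thesis
    by (simp add: ac_simps)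
qed

lemma summable_diophantine_weight:
  assumes "diophantine c \<alpha> r" "0 < c" "0 < \<epsilon>" "0 \<le> A" "0 < \<rho>" "\<rho> < 1"
  shows "summable (\<lambda>n. A * \<rho> ^ Suc n / (\<epsilon> * r (Suc n)) ^ k)"
proof (rule summable_comparison_test)
  show "summable (\<lambda>n. A / (c ^ k * \<epsilon> ^ k) * (real (Suc n) powr (\<alpha> * real k) * \<rho> ^ Suc n))"
    using assms(5,6) by (intro summable_mult summable_powr_mult_geometric)
  have "0 \<le> r (Suc n)" for n
  proof -
    have "0 \<le> c / real (Suc n) powr \<alpha>"
      using assms(2) by simp
    also have "\<dots> \<le> r (Suc n)"
      using assms(1) unfolding diophantine_def by (metis le_add1 plus_1_eq_Suc)
    finally show ?thesis .
  qed
  then show "\<exists>N. \<forall>n\<ge>N. norm (A * \<rho> ^ Suc n / (\<epsilon> * r (Suc n)) ^ k)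
      \<le> A / (c ^ k * \<epsilon> ^ k) * (real (Suc n) powr (\<alpha> * real k) * \<rho> ^ Suc n)"
    using assms diophantine_weight_le[OF assms(1-4), of \<rho> "Suc n" k for n] by auto
qed

lemma suminf_diophantine_weight_le:
  assumes "diophantine c \<alpha> r" "0 < c" "0 < \<epsilon>" "0 \<le> A" "0 < \<rho>" "\<rho> < 1"
  shows "(\<Sum>n. A * \<rho> ^ Suc n / (\<epsilon> * r (Suc n)) ^ k)
           \<le> A / (c ^ k * \<epsilon> ^ k) * (\<Sum>n. real (Suc n) powr (\<alpha> * real k) * \<rho> ^ Suc n)"
proof -
  have summable_powr: "summable (\<lambda>n. real (Suc n) powr (\<alpha> * real k) * \<rho> ^ Suc n)"
    using assms(5,6) by (rule summable_powr_mult_geometric)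
  have "(\<Sum>n. A * \<rho> ^ Suc n / (\<epsilon> * r (Suc n)) ^ k)
      \<le> (\<Sum>n. A / (c ^ k * \<epsilon> ^ k) * (real (Suc n) powr (\<alpha> * real k) * \<rho> ^ Suc n))"
    using diophantine_weight_le[OF assms(1-4), of \<rho> "Suc n" k for n] assms(5)
    by (intro suminf_le summable_diophantine_weight[OF assms] summable_mult[OF summable_powr]) auto
  also have "\<dots> = A / (c ^ k * \<epsilon> ^ k) * (\<Sum>n. real (Suc n) powr (\<alpha> * real k) * \<rho> ^ Suc n)"
    by (rule suminf_mult[OF summable_powr])
  finally show ?thesis .
qed

locale holomorphic_series_on_discs =
  fixes f :: "nat \<Rightarrow> complex \<Rightarrow> complex" and Z :: "complex set" and R M :: "nat \<Rightarrow> real"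
  assumes radius_pos: "\<And>n. n \<ge> 1 \<Longrightarrow> 0 < R n"
    and holomorphic: "\<And>n z. n \<ge> 1 \<Longrightarrow> z \<in> Z \<Longrightarrow> f n holomorphic_on ball z (R n)"
    and bounded: "\<And>n z w. n \<ge> 1 \<Longrightarrow> z \<in> Z \<Longrightarrow> w \<in> ball z (R n) \<Longrightarrow> norm (f n w) \<le> M n"
    and summable_majorant: "\<And>k. summable (\<lambda>n. M (Suc n) / R (Suc n) ^ k)"
begin

lemma norm_dseq_le:
  "n \<ge> 1 \<Longrightarrow> z \<in> Z \<Longrightarrow> norm (dseq k f n z) \<le> fact k * M n / R n ^ k"
  unfolding dseq_def by (rule Cauchy_inequality_ball[OF holomorphic radius_pos bounded])

lemma summable_dseq:
  assumes "z \<in> Z"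
  shows "summable (\<lambda>n. dseq k f (Suc n) z)"
proof (rule summable_norm_cancel, rule summable_comparison_test)
  show "\<exists>N. \<forall>n\<ge>N. norm (norm (dseq k f (Suc n) z)) \<le> fact k * (M (Suc n) / R (Suc n) ^ k)"
    using norm_dseq_le[OF _ assms] by auto
  show "summable (\<lambda>n. fact k * (M (Suc n) / R (Suc n) ^ k))"
    by (intro summable_mult summable_majorant)
qed

lemma norm_S_dseq_le:
  assumes "z \<in> Z"
  shows "norm (S (dseq k f) z) \<le> fact k * (\<Sum>n. M (Suc n) / R (Suc n) ^ k)"
proof -
  have "norm (S (dseq k f) z) \<le> (\<Sum>n. fact k * (M (Suc n) / R (Suc n) ^ k))"
    unfolding S_def
    by (rule norm_suminf_le[OF _ summable_mult[OF summable_majorant]])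
      (use norm_dseq_le[OF _ assms] in auto)
  also have "\<dots> = fact k * (\<Sum>n. M (Suc n) / R (Suc n) ^ k)"
    by (rule suminf_mult[OF summable_majorant])
  finally show ?thesis .
qed

lemma S_minus_taylor_polynomial:
  assumes "z \<in> Z" "z0 \<in> Z"
  shows "S f z - (\<Sum>k<m. S (dseq k f) z0 / of_nat (fact k) * (z - z0) ^ k)
       = (\<Sum>n. f (Suc n) z - (\<Sum>k<m. dseq k f (Suc n) z0 / fact k * (z - z0) ^ k))"
proof -
  have summable_term: "summable (\<lambda>n. dseq k f (Suc n) z0 / fact k * (z - z0) ^ k)" for k
    by (intro summable_mult2 summable_divide summable_dseq assms(2))
  have "(\<Sum>k<m. S (dseq k f) z0 / of_nat (fact k) * (z - z0) ^ k)
      = (\<Sum>k<m. \<Sum>n. dseq k f (Suc n) z0 / fact k * (z - z0) ^ k)"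
    unfolding S_def
  proof (intro sum.cong refl)
    fix k
    have "summable (\<lambda>n. dseq k f (Suc n) z0)"
      by (rule summable_dseq[OF assms(2)])
    then show "(\<Sum>n. dseq k f (Suc n) z0) / of_nat (fact k) * (z - z0) ^ k
             = (\<Sum>n. dseq k f (Suc n) z0 / fact k * (z - z0) ^ k)"
      using suminf_divide suminf_mult2 summable_divide by (metis of_nat_fact)
  qed
  also have "\<dots> = (\<Sum>n. \<Sum>k<m. dseq k f (Suc n) z0 / fact k * (z - z0) ^ k)"
    by (rule suminf_sum[symmetric]) (rule summable_term)
  finally show ?thesis
    using summable_dseq[OF assms(1), of 0] summable_term
    by (simp add: S_def dseq_def suminf_diff summable_sum)
qed

lemma S_taylor_remainder_le:
  assumes "z \<in> Z" "z0 \<in> Z"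
  shows "norm (S f z - (\<Sum>k<m. S (dseq k f) z0 / of_nat (fact k) * (z - z0) ^ k))
           \<le> (real m + 2) * 2 ^ m * (\<Sum>n. M (Suc n) / R (Suc n) ^ m) * norm (z - z0) ^ m"
proof -
  define C where "C = (real m + 2) * 2 ^ m * norm (z - z0) ^ m"
  have "norm (f (Suc n) z - (\<Sum>k<m. dseq k f (Suc n) z0 / fact k * (z - z0) ^ k))
          \<le> C * (M (Suc n) / R (Suc n) ^ m)" for n
  proof -
    have "Suc n \<ge> 1" by simp
    have "norm (f (Suc n) z) \<le> M (Suc n)"
      using bounded[OF \<open>Suc n \<ge> 1\<close> assms(1), of z] radius_pos[OF \<open>Suc n \<ge> 1\<close>] by simp
    from holomorphic_taylor_remainder_bound[OF holomorphic[OF \<open>Suc n \<ge> 1\<close> assms(2)]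
        radius_pos[OF \<open>Suc n \<ge> 1\<close>] bounded[OF \<open>Suc n \<ge> 1\<close> assms(2)] this, of m]
    show ?thesis
      by (simp add: C_def dseq_def power_divide ac_simps)
  qed
  then have "norm (\<Sum>n. f (Suc n) z - (\<Sum>k<m. dseq k f (Suc n) z0 / fact k * (z - z0) ^ k))
      \<le> (\<Sum>n. C * (M (Suc n) / R (Suc n) ^ m))"
    by (intro norm_suminf_le summable_mult summable_majorant)
  also have "\<dots> = C * (\<Sum>n. M (Suc n) / R (Suc n) ^ m)"
    by (rule suminf_mult[OF summable_majorant])
  finally show ?thesis
    by (simp only: S_minus_taylor_polynomial[OF assms]) (simp add: C_def ac_simps)
qed

end

lemma holomorphic_series_on_residual_set:
  assumes "0 < c" "0 < \<epsilon>" "\<epsilon> \<le> l - 1"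
    and "is_radius_function P r" "\<forall>n\<ge>1. r n \<le> 1" "diophantine c \<alpha> r"
    and "ereal \<epsilon> \<le> huygens_dist V' V"
    and "\<forall>n\<ge>1. \<exists>U. open U \<and> sheet_set P V r n \<subseteq> U \<and> f n holomorphic_on U"
    and "0 \<le> A" "0 < \<rho>" "\<rho> < 1"
    and "\<forall>n\<ge>1. \<forall>z\<in>sheet_set P V r n. norm (f n z) \<le> A * \<rho> ^ n"
  shows "holomorphic_series_on_discs f (residual_set P V' (\<lambda>n. l * r n))
           (\<lambda>n. \<epsilon> * r n) (\<lambda>n. A * \<rho> ^ n)"
proof
  fix n :: nat assume "n \<ge> 1"
  have "0 < r n"
    using assms(4) \<open>n \<ge> 1\<close> by (simp add: is_radius_function_def)
  then show "0 < \<epsilon> * r n"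
    using assms(2) by simp
  have disc: "ball z (\<epsilon> * r n) \<subseteq> sheet_set P V r n" if "z \<in> residual_set P V' (\<lambda>n. l * r n)" for z
  proof (rule ball_subset_sheet_set)
    show "ball u \<epsilon> \<subseteq> V" if "u \<in> V'" for u
      using ball_subset_of_huygens_dist[OF assms(7) that] .
    show "z \<in> sheet_set P V' (\<lambda>n. l * r n) n"
      using residual_set_subset_sheet_set[OF \<open>n \<ge> 1\<close>] that by blast
    show "\<epsilon> * r n \<le> \<epsilon>"
      using assms(2,5) \<open>n \<ge> 1\<close> by (simp add: mult_le_cancel_left1)
    show "\<epsilon> * r n + r n \<le> l * r n"
      using mult_right_mono[OF assms(3), of "r n"] \<open>0 < r n\<close> by (simp add: algebra_simps)
  qed
  fix z assume "z \<in> residual_set P V' (\<lambda>n. l * r n)"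
  obtain U where "sheet_set P V r n \<subseteq> U" "f n holomorphic_on U"
    using assms(8) \<open>n \<ge> 1\<close> by blast
  then show "f n holomorphic_on ball z (\<epsilon> * r n)"
    using disc[OF \<open>z \<in> _\<close>] holomorphic_on_subset by blast
  show "norm (f n w) \<le> A * \<rho> ^ n" if "w \<in> ball z (\<epsilon> * r n)" for w
    using assms(12) \<open>n \<ge> 1\<close> disc[OF \<open>z \<in> _\<close>] that by blast
next
  show "summable (\<lambda>n. A * \<rho> ^ Suc n / (\<epsilon> * r (Suc n)) ^ k)" for k
    using summable_diophantine_weight[OF assms(6,1,2,9,10,11)] .
qed

theorem corollaryC:
  fixes c \<alpha> l \<epsilon> A \<rho> :: real
    and P :: "nat \<Rightarrow> complex set"
    and r :: "nat \<Rightarrow> real"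
    and V V' :: "complex set"
    and f :: "nat \<Rightarrow> complex \<Rightarrow> complex"
  assumes "c > 0" "\<alpha> > 0" "l > 1" "\<epsilon> = l - 1"
    and "is_radius_function P r"
    and "is_lambda_radius_function l P r"
    and "\<forall>n\<ge>1. r n \<le> 1"
    and "diophantine c \<alpha> r"
    and "open V" "open V'" "V' \<subseteq> V"
    and "huygens_dist V' V \<ge> ereal \<epsilon>"
    and "\<forall>n\<ge>1. \<exists>U. open U \<and> sheet_set P V r n \<subseteq> U \<and> f n holomorphic_on U"
    and "A > 0" "0 < \<rho>" "\<rho> < 1"
    and "\<forall>n\<ge>1. \<forall>z\<in>sheet_set P V r n. norm (f n z) \<le> A * \<rho> ^ n"
  shows "(\<forall>z\<in>residual_set P V' (\<lambda>n. l * r n). \<forall>k.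
            summable (\<lambda>n. dseq k f (Suc n) z))
       \<and> (\<forall>m\<ge>1. \<exists>K. \<forall>z\<in>residual_set P V' (\<lambda>n. l * r n).
            \<forall>z0\<in>residual_set P V' (\<lambda>n. l * r n).
              norm (S f z - (\<Sum>k<m. S (dseq k f) z0 / of_nat (fact k) * (z - z0) ^ k))
                \<le> K * norm (z - z0) ^ m)
       \<and> (\<forall>z0\<in>residual_set P V' (\<lambda>n. l * r n). \<forall>m.
            norm (S (dseq m f) z0)
              \<le> A * fact m / (c ^ m * \<epsilon> ^ m)
                 * (\<Sum>n. real (Suc n) powr (\<alpha> * real m) * \<rho> ^ Suc n))"
proof -
  have "0 < \<epsilon>"
    using assms(3,4) by simp
  interpret holomorphic_series_on_discs f "residual_set P V' (\<lambda>n. l * r n)"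
    "\<lambda>n. \<epsilon> * r n" "\<lambda>n. A * \<rho> ^ n"
    using assms \<open>0 < \<epsilon>\<close> by (intro holomorphic_series_on_residual_set) auto
  have "norm (S (dseq m f) z0) \<le> A * fact m / (c ^ m * \<epsilon> ^ m)
          * (\<Sum>n. real (Suc n) powr (\<alpha> * real m) * \<rho> ^ Suc n)"
    if "z0 \<in> residual_set P V' (\<lambda>n. l * r n)" for z0 m
  proof -
    have "norm (S (dseq m f) z0) \<le> fact m * (\<Sum>n. A * \<rho> ^ Suc n / (\<epsilon> * r (Suc n)) ^ m)"
      using norm_S_dseq_le[OF that] by simp
    also have "\<dots> \<le> fact m * (A / (c ^ m * \<epsilon> ^ m)
                  * (\<Sum>n. real (Suc n) powr (\<alpha> * real m) * \<rho> ^ Suc n))"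
      using suminf_diophantine_weight_le[OF assms(8,1) \<open>0 < \<epsilon>\<close>] assms(14-16)
      by (intro mult_left_mono) auto
    finally show ?thesis
      by (simp add: ac_simps)
  qed
  then show ?thesis
    using summable_dseq S_taylor_remainder_le by blast
qed

end
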